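(* Let $G$ be a finite group, $N$ a normal subgroup, and $\mathcal O$ an $N_\infty$ operad for $G$. Then (i) the levelwise fixed points $\mathcal O^N$ (with $(\mathcal O^N)_n=\mathcal O_n^{N\times\{1\}}$) form an $N_\infty$ $G/N$-operad, and (ii) for $N\le H\le G$, a finite $H/N$-set is admissible for $\mathcal O^N$ if and only if it is admissible for $\mathcal O$ when regarded as an $H$-set via $H\to H/N$.
   Context: For a group $\Pi$, a $\Pi$-operad consists of $\Pi\times\Sigma_n$-spaces $\mathcal O_n$, a $\Pi$-fixed identity in $\mathcal O_1$ and $\Pi$-equivariant composition maps satisfying the usual operad axioms. A universal space for a family $\mathcal F$ of subgroups (closed under subgroups and conjugation) is a space whose $\Gamma$-fixed points are contractible for $\Gamma\in\mathcal F$ and empty otherwise. An $N_\infty$ $\Pi$-operad is a $\Pi$-operad with $\mathcal O_0$ $\Pi$-contractible, $\Sigma_n$ acting freely on $\mathcal O_n$, and $\mathcal O_n$ a universal space for a family of subgroups of $\Pi\times\Sigma_n$ containing all $L\times\{1\}$. For $L\le\Pi$ and a finite $L$-set $T$, $|T|=n$, let $\Gamma_T\le\Pi\times\Sigma_n$ be the graph of a homomorphism $L\to\Sigma_n$ encoding $T$; $T$ is admissible for $\mathcal O$ if $\mathcal O_n^{\Gamma_T}\neq\emptyset$. *)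

theory Defs
  imports "HOL-Analysis.Analysis" "HOL-Algebra.Sym_Groups" "HOL-Algebra.Coset"
begin

text \<open>
  The symmetric group Sigma_n is the library's sym_group n (permutations of
  {1..n}).  A Pi-operad has levels O_n, all modelled as topologies on one carrier type 'x,
  a left action of Pi x Sigma_n on O_n (act n (g, sigma)), an identity element
  and composition maps
     comp k j : O_k x O_{j 1} x ... x O_{j k} -> O_{j 1 + ... + j k},
  where the second argument is an (extensional) tuple indexed by {1..k}.
  Inputs of an n-ary operation are numbered 1..n; in a composite, the inputs of the
  i-th plugged operation occupy the block of positions J i + 1, ..., J i + j i,
  where J i = j 1 + ... + j (i-1).  Sigma_n acts on the left by relabelling inputs.
\<close>

record ('g, 'x) operad =
  lev  :: "nat \<Rightarrow> 'x topology"
  act  :: "nat \<Rightarrow> 'g \<times> (nat \<Rightarrow> nat) \<Rightarrow> 'x \<Rightarrow> 'x"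
  oid  :: "'x"
  comp :: "nat \<Rightarrow> (nat \<Rightarrow> nat) \<Rightarrow> 'x \<times> (nat \<Rightarrow> 'x) \<Rightarrow> 'x"

definition space_action :: "('g, 'm) monoid_scheme \<Rightarrow> 'x topology \<Rightarrow> ('g \<Rightarrow> 'x \<Rightarrow> 'x) \<Rightarrow> bool" where
  "space_action G X a \<longleftrightarrow>
     (\<forall>g\<in>carrier G. continuous_map X X (a g)) \<and>
     (\<forall>x\<in>topspace X. a \<one>\<^bsub>G\<^esub> x = x) \<and>
     (\<forall>g\<in>carrier G. \<forall>h\<in>carrier G. \<forall>x\<in>topspace X. a (g \<otimes>\<^bsub>G\<^esub> h) x = a g (a h x))"

definition set_action :: "('g, 'm) monoid_scheme \<Rightarrow> 't set \<Rightarrow> ('g \<Rightarrow> 't \<Rightarrow> 't) \<Rightarrow> bool" where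
  "set_action G T a \<longleftrightarrow>
     (\<forall>g\<in>carrier G. \<forall>t\<in>T. a g t \<in> T) \<and>
     (\<forall>t\<in>T. a \<one>\<^bsub>G\<^esub> t = t) \<and>
     (\<forall>g\<in>carrier G. \<forall>h\<in>carrier G. \<forall>t\<in>T. a (g \<otimes>\<^bsub>G\<^esub> h) t = a g (a h t))"

definition fixed_points :: "'x topology \<Rightarrow> ('h \<Rightarrow> 'x \<Rightarrow> 'x) \<Rightarrow> 'h set \<Rightarrow> 'x set" where
  "fixed_points X a K = {x \<in> topspace X. \<forall>k\<in>K. a k x = x}"

definition contractible_nonempty :: "'x topology \<Rightarrow> bool" where
  "contractible_nonempty X \<longleftrightarrow> topspace X \<noteq> {} \<and> contractible_space X"

definition equiv_contractible :: "('g, 'm) monoid_scheme \<Rightarrow> 'x topology \<Rightarrow> ('g \<Rightarrow> 'x \<Rightarrow> 'x) \<Rightarrow> bool" where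
  "equiv_contractible G X a \<longleftrightarrow>
     (\<exists>x0\<in>topspace X. (\<forall>g\<in>carrier G. a g x0 = x0) \<and>
        homotopic_with (\<lambda>f. \<forall>g\<in>carrier G. \<forall>x\<in>topspace X. f (a g x) = a g (f x))
          X X id (\<lambda>x. x0))"

definition blk :: "(nat \<Rightarrow> nat) \<Rightarrow> nat \<Rightarrow> nat" where
  "blk j i = (\<Sum>i'\<in>{1..<i}. j i')"

definition Pi_operad :: "('g, 'm) monoid_scheme \<Rightarrow> ('g, 'x, 'r) operad_scheme \<Rightarrow> bool" where
  "Pi_operad P Op \<longleftrightarrow>
   group P \<and>
   (\<forall>n. space_action (P \<times>\<times> sym_group n) (lev Op n) (act Op n)) \<and>
   oid Op \<in> topspace (lev Op 1) \<and>
   (\<forall>g\<in>carrier P. act Op 1 (g, id) (oid Op) = oid Op) \<and>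
   \<comment> \<open>continuity of composition (which includes mapping into the right level)\<close>
   (\<forall>k j. continuous_map
            (prod_topology (lev Op k) (product_topology (\<lambda>i. lev Op (j i)) {1..k}))
            (lev Op (\<Sum>i\<in>{1..k}. j i)) (comp Op k j)) \<and>
   \<comment> \<open>unit axioms\<close>
   (\<forall>n. \<forall>x\<in>topspace (lev Op n).
        comp Op 1 (\<lambda>_. n) (oid Op, restrict (\<lambda>_. x) {1}) = x \<and>
        comp Op n (\<lambda>_. 1) (x, restrict (\<lambda>_. oid Op) {1..n}) = x) \<and>
   \<comment> \<open>associativity\<close>
   (\<forall>k j h c d e.
      c \<in> topspace (lev Op k) \<longrightarrow>
      d \<in> (\<Pi>\<^sub>E i\<in>{1..k}. topspace (lev Op (j i))) \<longrightarrow>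
      e \<in> (\<Pi>\<^sub>E t\<in>{1..(\<Sum>i\<in>{1..k}. j i)}. topspace (lev Op (h t))) \<longrightarrow>
      comp Op (\<Sum>i\<in>{1..k}. j i) h (comp Op k j (c, d), e) =
      comp Op k (\<lambda>i. \<Sum>l\<in>{1..j i}. h (blk j i + l))
        (c, restrict (\<lambda>i. comp Op (j i) (\<lambda>l. h (blk j i + l))
                           (d i, restrict (\<lambda>l. e (blk j i + l)) {1..j i})) {1..k})) \<and>
   \<comment> \<open>Pi-equivariance\<close>
   (\<forall>k j g c d. g \<in> carrier P \<longrightarrow>
      c \<in> topspace (lev Op k) \<longrightarrow>
      d \<in> (\<Pi>\<^sub>E i\<in>{1..k}. topspace (lev Op (j i))) \<longrightarrow>
      comp Op k j (act Op k (g, id) c, restrict (\<lambda>i. act Op (j i) (g, id) (d i)) {1..k}) =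
      act Op (\<Sum>i\<in>{1..k}. j i) (g, id) (comp Op k j (c, d))) \<and>
   \<comment> \<open>Sigma-equivariance, top permutation (block permutation)\<close>
   (\<forall>k j \<sigma> \<beta> c d. \<sigma> \<in> carrier (sym_group k) \<longrightarrow>
      \<beta> \<in> carrier (sym_group (\<Sum>i\<in>{1..k}. j i)) \<longrightarrow>
      (\<forall>i\<in>{1..k}. \<forall>l\<in>{1..j (\<sigma> i)}. \<beta> (blk (j \<circ> \<sigma>) i + l) = blk j (\<sigma> i) + l) \<longrightarrow>
      c \<in> topspace (lev Op k) \<longrightarrow>
      d \<in> (\<Pi>\<^sub>E i\<in>{1..k}. topspace (lev Op (j i))) \<longrightarrow>
      comp Op k j (act Op k (\<one>\<^bsub>P\<^esub>, \<sigma>) c, d) =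
      act Op (\<Sum>i\<in>{1..k}. j i) (\<one>\<^bsub>P\<^esub>, \<beta>) (comp Op k (j \<circ> \<sigma>) (c, restrict (d \<circ> \<sigma>) {1..k}))) \<and>
   \<comment> \<open>Sigma-equivariance, bottom permutations (block sum)\<close>
   (\<forall>k j \<tau> \<rho> c d. (\<forall>i\<in>{1..k}. \<tau> i \<in> carrier (sym_group (j i))) \<longrightarrow>
      \<rho> \<in> carrier (sym_group (\<Sum>i\<in>{1..k}. j i)) \<longrightarrow>
      (\<forall>i\<in>{1..k}. \<forall>l\<in>{1..j i}. \<rho> (blk j i + l) = blk j i + \<tau> i l) \<longrightarrow>
      c \<in> topspace (lev Op k) \<longrightarrow>
      d \<in> (\<Pi>\<^sub>E i\<in>{1..k}. topspace (lev Op (j i))) \<longrightarrow>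
      comp Op k j (c, restrict (\<lambda>i. act Op (j i) (\<one>\<^bsub>P\<^esub>, \<tau> i) (d i)) {1..k}) =
      act Op (\<Sum>i\<in>{1..k}. j i) (\<one>\<^bsub>P\<^esub>, \<rho>) (comp Op k j (c, d)))"

definition subgroup_family :: "('g \<times> (nat \<Rightarrow> nat)) monoid \<Rightarrow> ('g \<times> (nat \<Rightarrow> nat)) set set \<Rightarrow> bool" where
  "subgroup_family Q F \<longleftrightarrow>
     (\<forall>\<Gamma>\<in>F. subgroup \<Gamma> Q) \<and>
     (\<forall>\<Gamma>\<in>F. \<forall>\<Gamma>'. subgroup \<Gamma>' Q \<longrightarrow> \<Gamma>' \<subseteq> \<Gamma> \<longrightarrow> \<Gamma>' \<in> F) \<and>
     (\<forall>\<Gamma>\<in>F. \<forall>q\<in>carrier Q. (\<lambda>y. q \<otimes>\<^bsub>Q\<^esub> y \<otimes>\<^bsub>Q\<^esub> inv\<^bsub>Q\<^esub> q) ` \<Gamma> \<in> F)"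

definition universal_space :: "('h, 'm) monoid_scheme \<Rightarrow> 'h set set \<Rightarrow> 'x topology \<Rightarrow> ('h \<Rightarrow> 'x \<Rightarrow> 'x) \<Rightarrow> bool" where
  "universal_space Q F X a \<longleftrightarrow>
     (\<forall>\<Gamma>. subgroup \<Gamma> Q \<longrightarrow>
        (\<Gamma> \<in> F \<longrightarrow> contractible_nonempty (subtopology X (fixed_points X a \<Gamma>))) \<and>
        (\<Gamma> \<notin> F \<longrightarrow> fixed_points X a \<Gamma> = {}))"

definition N_infty_operad :: "('g, 'm) monoid_scheme \<Rightarrow> ('g, 'x, 'r) operad_scheme \<Rightarrow> bool" where
  "N_infty_operad P Op \<longleftrightarrow>
     Pi_operad P Op \<and>
     equiv_contractible P (lev Op 0) (\<lambda>g. act Op 0 (g, id)) \<and>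
     (\<forall>n. \<forall>\<sigma>\<in>carrier (sym_group n). \<forall>x\<in>topspace (lev Op n).
          act Op n (\<one>\<^bsub>P\<^esub>, \<sigma>) x = x \<longrightarrow> \<sigma> = id) \<and>
     (\<forall>n. \<exists>F. subgroup_family (P \<times>\<times> sym_group n) F \<and>
          (\<forall>L. subgroup L P \<longrightarrow> L \<times> {id} \<in> F) \<and>
          universal_space (P \<times>\<times> sym_group n) F (lev Op n) (act Op n))"

text \<open>Admissibility: a finite L-set T (L \<le> Pi) with |T| = n is admissible if the graph
  Gamma_T of the homomorphism L \<rightarrow> Sigma_n encoding T (via some numbering
  e : T \<rightarrow> {1..n}) has nonempty fixed points in O_n.\<close>
definition graph_of_Lset :: "'g set \<Rightarrow> 't set \<Rightarrow> ('g \<Rightarrow> 't \<Rightarrow> 't) \<Rightarrow> ('t \<Rightarrow> nat) \<Rightarrow> ('g \<times> (nat \<Rightarrow> nat)) set" where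
  "graph_of_Lset L T a e =
     {(l, \<lambda>m. if m \<in> {1..card T} then e (a l (inv_into T e m)) else m) | l. l \<in> L}"

definition admissible :: "('g, 'm) monoid_scheme \<Rightarrow> ('g, 'x, 'r) operad_scheme \<Rightarrow> 'g set \<Rightarrow> 't set \<Rightarrow> ('g \<Rightarrow> 't \<Rightarrow> 't) \<Rightarrow> bool" where
  "admissible P Op L T a \<longleftrightarrow>
     (\<exists>e. bij_betw e T {1..card T} \<and>
        fixed_points (lev Op (card T)) (act Op (card T)) (graph_of_Lset L T a e) \<noteq> {})"

text \<open>The levelwise N-fixed point operad, a G/N-operad; a coset acts through any representative.\<close>
definition fixed_operad :: "('g, 'm) monoid_scheme \<Rightarrow> 'g set \<Rightarrow> ('g, 'x, 'r) operad_scheme \<Rightarrow> ('g set, 'x) operad" where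
  "fixed_operad G N Op =
     \<lparr> lev = (\<lambda>n. subtopology (lev Op n) (fixed_points (lev Op n) (act Op n) (N \<times> {id}))),
       act = (\<lambda>n (C, \<sigma>) x. act Op n (SOME g. g \<in> C, \<sigma>) x),
       oid = oid Op,
       comp = comp Op \<rparr>"

end

theory Submission
  imports Defs
begin

text \<open>
  Since N is normal, the action of G x Sigma_n on O_n preserves the N-fixed points, and on
  them it factors through the quotient map q : G x Sigma_n \<rightarrow> G/N x Sigma_n.  Hence for every
  Gamma \<le> G/N x Sigma_n containing the unit, the Gamma-fixed points of O^N_n are the
  q^{-1}(Gamma)-fixed points of O_n.  Pulling the family of O_n back along q therefore gives a
  family for which O^N_n is a universal space, and the graph of an H/N-set pulls back along q
  to the graph of the inflated H-set, which gives the admissibility statement.  The structure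
  maps of O restrict to the N-fixed points because they are G-equivariant.
\<close>

lemma space_action_DirProdD:
  assumes "space_action (G \<times>\<times> sym_group n) X a"
  shows "\<And>g \<sigma>. g \<in> carrier G \<Longrightarrow> \<sigma> \<in> carrier (sym_group n) \<Longrightarrow> continuous_map X X (a (g, \<sigma>))"
    and "\<And>x. x \<in> topspace X \<Longrightarrow> a (\<one>\<^bsub>G\<^esub>, id) x = x"
    and "\<And>g \<sigma> h \<tau> x. g \<in> carrier G \<Longrightarrow> \<sigma> \<in> carrier (sym_group n) \<Longrightarrow> h \<in> carrier G \<Longrightarrow>
           \<tau> \<in> carrier (sym_group n) \<Longrightarrow> x \<in> topspace X \<Longrightarrow>
           a (g \<otimes>\<^bsub>G\<^esub> h, \<sigma> \<circ> \<tau>) x = a (g, \<sigma>) (a (h, \<tau>) x)"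
  using assms unfolding space_action_def
  by (auto simp: sym_group_one sym_group_mult)

lemma set_action_bij_betw:
  assumes "group K" and act: "set_action K T a" and k: "k \<in> carrier K"
  shows "bij_betw (a k) T T"
proof -
  interpret K: group K by fact
  have inv_cancel: "a (inv\<^bsub>K\<^esub> l) (a l t) = t" if "l \<in> carrier K" "t \<in> T" for l t
    using act that unfolding set_action_def by (metis K.l_inv K.inv_closed)
  show ?thesis
    by (rule bij_betwI[where g = "a (inv\<^bsub>K\<^esub> k)"])
      (use act k inv_cancel[of k] inv_cancel[of "inv\<^bsub>K\<^esub> k"] in \<open>auto simp: set_action_def\<close>)
qed

lemma (in group) conj_inv_conj:
  "a \<in> carrier G \<Longrightarrow> b \<in> carrier G \<Longrightarrow> a \<otimes> (inv a \<otimes> b \<otimes> a) \<otimes> inv a = b"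
  by (simp add: m_assoc[symmetric], simp add: m_assoc)

lemma (in group) inv_conj_conj:
  "a \<in> carrier G \<Longrightarrow> b \<in> carrier G \<Longrightarrow> inv a \<otimes> (a \<otimes> b \<otimes> inv a) \<otimes> a = b"
  by (simp add: m_assoc[symmetric], simp add: m_assoc)

lemma (in group_hom) subgroup_vimage:
  assumes "subgroup K H"
  shows "subgroup {x \<in> carrier G. h x \<in> K} G"
proof (rule G.subgroupI)
  show "{x \<in> carrier G. h x \<in> K} \<noteq> {}"
    using assms subgroup.one_closed by fastforce
  show "\<And>x. x \<in> {x \<in> carrier G. h x \<in> K} \<Longrightarrow> inv x \<in> {x \<in> carrier G. h x \<in> K}"
    using assms subgroup.m_inv_closed by fastforce
  show "\<And>x y. x \<in> {x \<in> carrier G. h x \<in> K} \<Longrightarrow> y \<in> {x \<in> carrier G. h x \<in> K} \<Longrightarrow>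
      x \<otimes> y \<in> {x \<in> carrier G. h x \<in> K}"
    using assms subgroup.m_closed by fastforce
qed auto

lemma (in group_hom) vimage_conjugate:
  assumes q: "q \<in> carrier G" and \<Gamma>: "\<Gamma> \<subseteq> carrier H"
  shows "{x \<in> carrier G. h x \<in> (\<lambda>y. h q \<otimes>\<^bsub>H\<^esub> y \<otimes>\<^bsub>H\<^esub> inv\<^bsub>H\<^esub> h q) ` \<Gamma>}
       = (\<lambda>y. q \<otimes> y \<otimes> inv q) ` {x \<in> carrier G. h x \<in> \<Gamma>}"
proof
  show "(\<lambda>y. q \<otimes> y \<otimes> inv q) ` {x \<in> carrier G. h x \<in> \<Gamma>}
      \<subseteq> {x \<in> carrier G. h x \<in> (\<lambda>y. h q \<otimes>\<^bsub>H\<^esub> y \<otimes>\<^bsub>H\<^esub> inv\<^bsub>H\<^esub> h q) ` \<Gamma>}"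
  proof (rule image_subsetI)
    fix y assume y: "y \<in> {x \<in> carrier G. h x \<in> \<Gamma>}"
    then have "h (q \<otimes> y \<otimes> inv q) = h q \<otimes>\<^bsub>H\<^esub> h y \<otimes>\<^bsub>H\<^esub> inv\<^bsub>H\<^esub> h q"
      using q by simp
    then show "q \<otimes> y \<otimes> inv q
        \<in> {x \<in> carrier G. h x \<in> (\<lambda>y. h q \<otimes>\<^bsub>H\<^esub> y \<otimes>\<^bsub>H\<^esub> inv\<^bsub>H\<^esub> h q) ` \<Gamma>}"
      using q y by blast
  qed
next
  show "{x \<in> carrier G. h x \<in> (\<lambda>y. h q \<otimes>\<^bsub>H\<^esub> y \<otimes>\<^bsub>H\<^esub> inv\<^bsub>H\<^esub> h q) ` \<Gamma>}
      \<subseteq> (\<lambda>y. q \<otimes> y \<otimes> inv q) ` {x \<in> carrier G. h x \<in> \<Gamma>}"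
  proof
    fix z assume "z \<in> {x \<in> carrier G. h x \<in> (\<lambda>y. h q \<otimes>\<^bsub>H\<^esub> y \<otimes>\<^bsub>H\<^esub> inv\<^bsub>H\<^esub> h q) ` \<Gamma>}"
    then obtain w where z: "z \<in> carrier G" and w: "w \<in> \<Gamma>"
      and hz: "h z = h q \<otimes>\<^bsub>H\<^esub> w \<otimes>\<^bsub>H\<^esub> inv\<^bsub>H\<^esub> h q"
      by blast
    have "h (inv q \<otimes> z \<otimes> q) = inv\<^bsub>H\<^esub> h q \<otimes>\<^bsub>H\<^esub> h z \<otimes>\<^bsub>H\<^esub> h q"
      using q z by simp
    also have "\<dots> = w"
      unfolding hz using q w \<Gamma> by (simp add: H.inv_conj_conj subsetD)
    finally have "h (inv q \<otimes> z \<otimes> q) = w" .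
    then have "inv q \<otimes> z \<otimes> q \<in> {x \<in> carrier G. h x \<in> \<Gamma>}"
      using q z w by simp
    moreover have "z = q \<otimes> (inv q \<otimes> z \<otimes> q) \<otimes> inv q"
      using q z by (simp add: G.conj_inv_conj)
    ultimately show "z \<in> (\<lambda>y. q \<otimes> y \<otimes> inv q) ` {x \<in> carrier G. h x \<in> \<Gamma>}"
      by blast
  qed
qed

lemma subgroup_family_vimage:
  fixes G :: "('g \<times> (nat \<Rightarrow> nat)) monoid" and H :: "('h \<times> (nat \<Rightarrow> nat)) monoid"
  assumes hom: "group_hom G H h" and surj: "h ` carrier G = carrier H"
    and F: "subgroup_family G F"
  shows "subgroup_family H {\<Gamma>. \<Gamma> \<subseteq> carrier H \<and> {x \<in> carrier G. h x \<in> \<Gamma>} \<in> F}"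
proof -
  interpret group_hom G H h by (fact hom)
  have F_subgroup: "\<And>\<Gamma>. \<Gamma> \<in> F \<Longrightarrow> subgroup \<Gamma> G"
    and F_down: "\<And>\<Gamma> \<Gamma>'. \<Gamma> \<in> F \<Longrightarrow> subgroup \<Gamma>' G \<Longrightarrow> \<Gamma>' \<subseteq> \<Gamma> \<Longrightarrow> \<Gamma>' \<in> F"
    and F_conj: "\<And>\<Gamma> q. \<Gamma> \<in> F \<Longrightarrow> q \<in> carrier G \<Longrightarrow> (\<lambda>y. q \<otimes>\<^bsub>G\<^esub> y \<otimes>\<^bsub>G\<^esub> inv\<^bsub>G\<^esub> q) ` \<Gamma> \<in> F"
    using F unfolding subgroup_family_def by blast+
  define lift where "lift \<Gamma> = {x \<in> carrier G. h x \<in> \<Gamma>}" for \<Gamma>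
  have img: "h ` lift \<Gamma> = \<Gamma>" if "\<Gamma> \<subseteq> carrier H" for \<Gamma>
  proof
    show "\<Gamma> \<subseteq> h ` lift \<Gamma>"
    proof
      fix \<gamma> assume "\<gamma> \<in> \<Gamma>"
      moreover have "\<gamma> \<in> h ` carrier G"
        using that surj \<open>\<gamma> \<in> \<Gamma>\<close> by blast
      then obtain x where "x \<in> carrier G" "h x = \<gamma>"
        by blast
      ultimately show "\<gamma> \<in> h ` lift \<Gamma>"
        unfolding lift_def by blast
    qed
  qed (auto simp: lift_def)
  show ?thesis
    unfolding subgroup_family_def lift_def[symmetric]
  proof (intro conjI ballI allI impI)
    fix \<Gamma> assume "\<Gamma> \<in> {\<Gamma>. \<Gamma> \<subseteq> carrier H \<and> lift \<Gamma> \<in> F}"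
    then have \<Gamma>: "\<Gamma> \<subseteq> carrier H" "lift \<Gamma> \<in> F"
      by simp_all
    have "subgroup (h ` lift \<Gamma>) H"
      by (rule subgroup_img_is_subgroup[OF F_subgroup[OF \<Gamma>(2)]])
    then show "subgroup \<Gamma> H"
      by (simp only: img[OF \<Gamma>(1)])
    show "\<Gamma>' \<in> {\<Gamma>. \<Gamma> \<subseteq> carrier H \<and> lift \<Gamma> \<in> F}" if "subgroup \<Gamma>' H" "\<Gamma>' \<subseteq> \<Gamma>" for \<Gamma>'
      unfolding mem_Collect_eq
    proof
      show "\<Gamma>' \<subseteq> carrier H"
        using that(1) subgroup.subset by blast
      have "lift \<Gamma>' \<subseteq> lift \<Gamma>"
        using that(2) unfolding lift_def by blast
      moreover have "subgroup (lift \<Gamma>') G"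
        unfolding lift_def by (rule subgroup_vimage[OF that(1)])
      ultimately show "lift \<Gamma>' \<in> F"
        using F_down[OF \<Gamma>(2)] by blast
    qed
    fix q assume q: "q \<in> carrier H"
    then have "q \<in> h ` carrier G"
      using surj by simp
    then obtain q' where q': "q' \<in> carrier G" "h q' = q"
      by blast
    have "(\<lambda>y. q \<otimes>\<^bsub>H\<^esub> y \<otimes>\<^bsub>H\<^esub> inv\<^bsub>H\<^esub> q) ` \<Gamma> \<subseteq> carrier H"
      using \<Gamma> q by (auto intro!: image_subsetI)
    moreover have "lift ((\<lambda>y. q \<otimes>\<^bsub>H\<^esub> y \<otimes>\<^bsub>H\<^esub> inv\<^bsub>H\<^esub> q) ` \<Gamma>)
        = (\<lambda>y. q' \<otimes>\<^bsub>G\<^esub> y \<otimes>\<^bsub>G\<^esub> inv\<^bsub>G\<^esub> q') ` lift \<Gamma>"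
      unfolding lift_def by (rule vimage_conjugate[OF q'(1) \<Gamma>(1), unfolded q'(2)])
    then have "lift ((\<lambda>y. q \<otimes>\<^bsub>H\<^esub> y \<otimes>\<^bsub>H\<^esub> inv\<^bsub>H\<^esub> q) ` \<Gamma>) \<in> F"
      using F_conj[OF \<Gamma>(2) q'(1)] by simp
    ultimately show "(\<lambda>y. q \<otimes>\<^bsub>H\<^esub> y \<otimes>\<^bsub>H\<^esub> inv\<^bsub>H\<^esub> q) ` \<Gamma>
        \<in> {\<Gamma>. \<Gamma> \<subseteq> carrier H \<and> lift \<Gamma> \<in> F}"
      by blast
  qed
qed

definition Lset_perm :: "'t set \<Rightarrow> ('g \<Rightarrow> 't \<Rightarrow> 't) \<Rightarrow> ('t \<Rightarrow> nat) \<Rightarrow> 'g \<Rightarrow> nat \<Rightarrow> nat" where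
  "Lset_perm T a e l = (\<lambda>m. if m \<in> {1..card T} then e (a l (inv_into T e m)) else m)"

lemma graph_of_Lset_eq: "graph_of_Lset L T a e = (\<lambda>l. (l, Lset_perm T a e l)) ` L"
  unfolding graph_of_Lset_def Lset_perm_def by auto

lemma Lset_perm_in_sym_group:
  assumes e: "bij_betw e T {1..card T}" and a: "bij_betw (a l) T T"
  shows "Lset_perm T a e l \<in> carrier (sym_group (card T))"
proof -
  have "bij_betw (e \<circ> (a l \<circ> inv_into T e)) {1..card T} {1..card T}"
    using bij_betw_trans[OF bij_betw_trans[OF bij_betw_inv_into[OF e] a] e] .
  then have "bij_betw (Lset_perm T a e l) {1..card T} {1..card T}"
    by (rule bij_betw_cong[THEN iffD1, rotated]) (simp add: Lset_perm_def)
  then have "Lset_perm T a e l permutes {1..card T}"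
    by (rule bij_imp_permutes) (auto simp: Lset_perm_def)
  then show ?thesis
    by (simp add: sym_group_carrier)
qed

lemma Lset_perm_trivial:
  assumes e: "bij_betw e T {1..card T}" and a: "\<And>t. t \<in> T \<Longrightarrow> a l t = t"
  shows "Lset_perm T a e l = id"
proof
  fix m
  show "Lset_perm T a e l m = id m"
  proof (cases "m \<in> {1..card T}")
    case True
    then have m: "m \<in> e ` T"
      using e bij_betw_imp_surj_on by blast
    then show ?thesis
      using True a[OF inv_into_into[OF m]] f_inv_into_f[OF m] by (simp add: Lset_perm_def)
  qed (auto simp: Lset_perm_def)
qed

lemma (in group) rcos_in_image_iff:
  assumes N: "subgroup N G" and H: "subgroup H G" and NH: "N \<subseteq> H" and g: "g \<in> carrier G"
  shows "N #> g \<in> (#>) N ` H \<longleftrightarrow> g \<in> H"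
proof
  assume "N #> g \<in> (#>) N ` H"
  then obtain h where h: "h \<in> H" "N #> g = N #> h"
    by blast
  have "g \<in> N #> h"
    using rcos_self[OF g N] h(2) by simp
  then show "g \<in> H"
    using h(1) NH subgroup.m_closed[OF H] unfolding r_coset_def by blast
qed blast

locale N_infty_fixed_points = normal N G
  for N and G :: "('a, 'm) monoid_scheme" (structure) +
  fixes Op :: "('a, 'x) operad"
  assumes N_infty: "N_infty_operad G Op"
begin

definition NFix :: "nat \<Rightarrow> 'x set" where
  "NFix n = fixed_points (lev Op n) (act Op n) (N \<times> {id})"

definition coset_rep :: "'a set \<Rightarrow> 'a" where
  "coset_rep C = (SOME g. g \<in> C)"

abbreviation ON :: "('a set, 'x) operad" where
  "ON \<equiv> fixed_operad G N Op"

abbreviation Q :: "nat \<Rightarrow> ('a \<times> (nat \<Rightarrow> nat)) monoid" where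
  "Q n \<equiv> G \<times>\<times> sym_group n"

abbreviation QN :: "nat \<Rightarrow> ('a set \<times> (nat \<Rightarrow> nat)) monoid" where
  "QN n \<equiv> (G Mod N) \<times>\<times> sym_group n"

definition quot_map :: "'a \<times> (nat \<Rightarrow> nat) \<Rightarrow> 'a set \<times> (nat \<Rightarrow> nat)" where
  "quot_map q = (N #> fst q, snd q)"

abbreviation lift :: "nat \<Rightarrow> ('a set \<times> (nat \<Rightarrow> nat)) set \<Rightarrow> ('a \<times> (nat \<Rightarrow> nat)) set" where
  "lift n \<Gamma> \<equiv> {q \<in> carrier (Q n). quot_map q \<in> \<Gamma>}"

lemma Pi_operad_Op: "Pi_operad G Op"
  using N_infty unfolding N_infty_operad_def by blast

lemmas Op_axioms = Pi_operad_Op[unfolded Pi_operad_def]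
lemmas Op_space_action = Op_axioms[THEN conjunct2, THEN conjunct1, rule_format]
lemmas Op_oid = Op_axioms[THEN conjunct2, THEN conjunct2, THEN conjunct1]
lemmas Op_oid_fixed = Op_axioms[THEN conjunct2, THEN conjunct2, THEN conjunct2, THEN conjunct1]
lemmas Op_comp_continuous =
  Op_axioms[THEN conjunct2, THEN conjunct2, THEN conjunct2, THEN conjunct2, THEN conjunct1]
lemmas Op_unit =
  Op_axioms[THEN conjunct2, THEN conjunct2, THEN conjunct2, THEN conjunct2, THEN conjunct2,
    THEN conjunct1]
lemmas Op_assoc =
  Op_axioms[THEN conjunct2, THEN conjunct2, THEN conjunct2, THEN conjunct2, THEN conjunct2,
    THEN conjunct2, THEN conjunct1]
lemmas Op_comp_equivariant =
  Op_axioms[THEN conjunct2, THEN conjunct2, THEN conjunct2, THEN conjunct2, THEN conjunct2,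
    THEN conjunct2, THEN conjunct2, THEN conjunct1]
lemmas Op_comp_equivariant_top =
  Op_axioms[THEN conjunct2, THEN conjunct2, THEN conjunct2, THEN conjunct2, THEN conjunct2,
    THEN conjunct2, THEN conjunct2, THEN conjunct2, THEN conjunct1]
lemmas Op_comp_equivariant_bottom =
  Op_axioms[THEN conjunct2, THEN conjunct2, THEN conjunct2, THEN conjunct2, THEN conjunct2,
    THEN conjunct2, THEN conjunct2, THEN conjunct2, THEN conjunct2]

lemma id_in_sym_group: "id \<in> carrier (sym_group n)"
  by (simp add: sym_group_carrier permutes_id)

lemma act_closed:
  "g \<in> carrier G \<Longrightarrow> \<sigma> \<in> carrier (sym_group n) \<Longrightarrow> x \<in> topspace (lev Op n) \<Longrightarrow>
   act Op n (g, \<sigma>) x \<in> topspace (lev Op n)"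
  using space_action_DirProdD(1)[OF Op_space_action, of g \<sigma>] unfolding continuous_map_def by blast

lemma act_mult:
  "g \<in> carrier G \<Longrightarrow> \<sigma> \<in> carrier (sym_group n) \<Longrightarrow> h \<in> carrier G \<Longrightarrow> \<tau> \<in> carrier (sym_group n) \<Longrightarrow>
   x \<in> topspace (lev Op n) \<Longrightarrow> act Op n (g \<otimes> h, \<sigma> \<circ> \<tau>) x = act Op n (g, \<sigma>) (act Op n (h, \<tau>) x)"
  using space_action_DirProdD(3)[OF Op_space_action] by blast

lemma act_mult_DirProd:
  "q \<in> carrier (Q n) \<Longrightarrow> q' \<in> carrier (Q n) \<Longrightarrow> x \<in> topspace (lev Op n) \<Longrightarrow>
   act Op n (q \<otimes>\<^bsub>Q n\<^esub> q') x = act Op n q (act Op n q' x)"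
  using Op_space_action[of n] unfolding space_action_def by blast

lemma NFix_subset: "NFix n \<subseteq> topspace (lev Op n)"
  unfolding NFix_def fixed_points_def by auto

lemma NFixI:
  "x \<in> topspace (lev Op n) \<Longrightarrow> (\<And>m. m \<in> N \<Longrightarrow> act Op n (m, id) x = x) \<Longrightarrow> x \<in> NFix n"
  unfolding NFix_def fixed_points_def by auto

lemma NFixD: "x \<in> NFix n \<Longrightarrow> m \<in> N \<Longrightarrow> act Op n (m, id) x = x"
  unfolding NFix_def fixed_points_def by auto

lemma lev_fixed_operad: "lev ON n = subtopology (lev Op n) (NFix n)"
  by (simp add: fixed_operad_def NFix_def)

lemma topspace_fixed_operad: "topspace (lev ON n) = NFix n"
  using NFix_subset by (auto simp: lev_fixed_operad)

lemma act_fixed_operad: "act ON n (C, \<sigma>) x = act Op n (coset_rep C, \<sigma>) x"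
  by (simp add: fixed_operad_def coset_rep_def)

text \<open>m g = g (g^-1 m g), and g^-1 m g \<in> N by normality.\<close>
lemma act_NFix:
  assumes x: "x \<in> NFix n" and g: "g \<in> carrier G" and \<sigma>: "\<sigma> \<in> carrier (sym_group n)"
  shows "act Op n (g, \<sigma>) x \<in> NFix n"
proof (rule NFixI)
  have x_top: "x \<in> topspace (lev Op n)"
    using x NFix_subset by blast
  show "act Op n (g, \<sigma>) x \<in> topspace (lev Op n)"
    using act_closed g \<sigma> x_top by blast
  fix m assume m: "m \<in> N"
  define m' where "m' = inv g \<otimes> m \<otimes> g"
  have m'N: "m' \<in> N"
    unfolding m'_def using inv_op_closed1[OF g m] .
  have "m \<otimes> g = g \<otimes> m'"
    unfolding m'_def using g m by (simp add: m_assoc[symmetric])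
  then have "act Op n (m, id) (act Op n (g, \<sigma>) x) = act Op n (g, \<sigma>) (act Op n (m', id) x)"
    using act_mult[OF _ id_in_sym_group g \<sigma> x_top, of m] act_mult[OF g \<sigma> _ id_in_sym_group x_top, of m']
      m m'N by simp
  then show "act Op n (m, id) (act Op n (g, \<sigma>) x) = act Op n (g, \<sigma>) x"
    using NFixD[OF x m'N] by simp
qed

lemma act_rcos_eq:
  assumes x: "x \<in> NFix n" and g: "g \<in> carrier G" and \<sigma>: "\<sigma> \<in> carrier (sym_group n)"
    and g': "g' \<in> N #> g"
  shows "act Op n (g', \<sigma>) x = act Op n (g, \<sigma>) x"
proof -
  obtain m where m: "m \<in> N" "g' = m \<otimes> g"
    using g' unfolding r_coset_def by auto
  have "act Op n (g', \<sigma>) x = act Op n (m, id) (act Op n (g, \<sigma>) x)"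
    using act_mult[OF _ id_in_sym_group g \<sigma>, of m x] m x NFix_subset by auto
  also have "\<dots> = act Op n (g, \<sigma>) x"
    using NFixD[OF act_NFix[OF x g \<sigma>] m(1)] .
  finally show ?thesis .
qed

lemma coset_rep:
  assumes "C \<in> carrier (G Mod N)"
  shows "coset_rep C \<in> carrier G" and "C = N #> coset_rep C"
proof -
  obtain h where h: "h \<in> carrier G" "C = N #> h"
    using assms by (auto simp: FactGroup_def RCOSETS_def)
  have "h \<in> C"
    using rcos_self[OF h(1) is_subgroup] h(2) by simp
  then have "coset_rep C \<in> C"
    unfolding coset_rep_def by (rule someI)
  then show "coset_rep C \<in> carrier G" "C = N #> coset_rep C"
    using h repr_independence[OF _ h(1) is_subgroup] r_coset_subset_G[OF subset h(1)] by auto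
qed

lemma act_fixed_operad_rcos:
  assumes x: "x \<in> NFix n" and g: "g \<in> carrier G" and \<sigma>: "\<sigma> \<in> carrier (sym_group n)"
  shows "act ON n (N #> g, \<sigma>) x = act Op n (g, \<sigma>) x"
proof -
  have "N #> g \<in> carrier (G Mod N)"
    using g by (simp add: FactGroup_def rcosetsI subset)
  then have "coset_rep (N #> g) \<in> N #> g"
    using coset_rep rcos_self is_subgroup by metis
  then show ?thesis
    unfolding act_fixed_operad using act_rcos_eq[OF x g \<sigma>] by blast
qed

lemma act_fixed_operad_one:
  "x \<in> NFix n \<Longrightarrow> \<sigma> \<in> carrier (sym_group n) \<Longrightarrow> act ON n (N, \<sigma>) x = act Op n (\<one>, \<sigma>) x"
  using act_fixed_operad_rcos[of x n \<one> \<sigma>] subset by simp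

lemma quot_map_hom: "group_hom (Q n) (QN n) quot_map"
proof -
  have "quot_map \<in> hom (Q n) (QN n)"
    using r_coset_hom_Mod unfolding hom_def quot_map_def by auto
  then show ?thesis
    by (simp add: group_hom_def group_hom_axioms_def DirProd_group is_group sym_group_is_group
        factorgroup_is_group)
qed

lemma quot_map_surj: "quot_map ` carrier (Q n) = carrier (QN n)"
proof
  show "quot_map ` carrier (Q n) \<subseteq> carrier (QN n)"
    using group_hom.hom_closed[OF quot_map_hom] by blast
  show "carrier (QN n) \<subseteq> quot_map ` carrier (Q n)"
  proof
    fix q assume "q \<in> carrier (QN n)"
    then show "q \<in> quot_map ` carrier (Q n)"
      using coset_rep by (intro image_eqI[of _ _ "(coset_rep (fst q), snd q)"]) (auto simp: quot_map_def)
  qed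
qed

lemma act_fixed_operad_quot_map:
  "x \<in> NFix n \<Longrightarrow> q \<in> carrier (Q n) \<Longrightarrow> act ON n (quot_map q) x = act Op n q x"
  by (cases q) (auto simp: quot_map_def act_fixed_operad_rcos)

lemma act_DirProd_NFix: "x \<in> NFix n \<Longrightarrow> q \<in> carrier (Q n) \<Longrightarrow> act Op n q x \<in> NFix n"
  using act_NFix by (cases q) auto

text \<open>The unit condition puts N x {id} into the preimage, so preimage-fixed points are N-fixed.\<close>
lemma fixed_points_fixed_operad:
  assumes \<Gamma>: "\<Gamma> \<subseteq> carrier (QN n)" and one: "\<one>\<^bsub>QN n\<^esub> \<in> \<Gamma>"
  shows "fixed_points (lev ON n) (act ON n) \<Gamma> = fixed_points (lev Op n) (act Op n) (lift n \<Gamma>)"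
proof
  show "fixed_points (lev ON n) (act ON n) \<Gamma> \<subseteq> fixed_points (lev Op n) (act Op n) (lift n \<Gamma>)"
    unfolding fixed_points_def topspace_fixed_operad
    using NFix_subset act_fixed_operad_quot_map by fastforce
next
  show "fixed_points (lev Op n) (act Op n) (lift n \<Gamma>) \<subseteq> fixed_points (lev ON n) (act ON n) \<Gamma>"
  proof
    fix x assume "x \<in> fixed_points (lev Op n) (act Op n) (lift n \<Gamma>)"
    then have x: "x \<in> topspace (lev Op n)" "\<And>q. q \<in> lift n \<Gamma> \<Longrightarrow> act Op n q x = x"
      unfolding fixed_points_def by auto
    have x_NFix: "x \<in> NFix n"
    proof (rule NFixI[OF x(1)])
      fix m assume m: "m \<in> N"
      then have "quot_map (m, id) = \<one>\<^bsub>QN n\<^esub>"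
        using coset_join2[OF _ is_subgroup m] subset by (auto simp: quot_map_def sym_group_one)
      then show "act Op n (m, id) x = x"
        using x(2) m subset id_in_sym_group one by auto
    qed
    have "act ON n q x = x" if "q \<in> \<Gamma>" for q
    proof -
      have "q \<in> quot_map ` carrier (Q n)"
        using quot_map_surj[of n] \<Gamma> \<open>q \<in> \<Gamma>\<close> by blast
      then obtain q' where q': "q' \<in> carrier (Q n)" "quot_map q' = q"
        by blast
      then show ?thesis
        using act_fixed_operad_quot_map[OF x_NFix q'(1)] x(2) \<open>q \<in> \<Gamma>\<close> by auto
    qed
    then show "x \<in> fixed_points (lev ON n) (act ON n) \<Gamma>"
      unfolding fixed_points_def topspace_fixed_operad using x_NFix by blast
  qed
qed

lemma subtopology_fixed_points_fixed_operad:
  assumes "\<Gamma> \<subseteq> carrier (QN n)" and "\<one>\<^bsub>QN n\<^esub> \<in> \<Gamma>"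
  shows "subtopology (lev ON n) (fixed_points (lev ON n) (act ON n) \<Gamma>)
       = subtopology (lev Op n) (fixed_points (lev Op n) (act Op n) (lift n \<Gamma>))"
proof -
  have "fixed_points (lev Op n) (act Op n) (lift n \<Gamma>) \<subseteq> NFix n"
    using fixed_points_fixed_operad[OF assms] topspace_fixed_operad[of n]
    unfolding fixed_points_def by blast
  then show ?thesis
    unfolding fixed_points_fixed_operad[OF assms] unfolding lev_fixed_operad subtopology_subtopology
    by (simp add: Int_absorb1)
qed

lemma lift_Times_id:
  assumes L: "subgroup L (G Mod N)"
  shows "lift n (L \<times> {id}) = \<Union>L \<times> {id}"
proof (rule equalityI; rule subsetI)
  fix q :: "'a \<times> (nat \<Rightarrow> nat)" assume "q \<in> lift n (L \<times> {id})"
  then obtain g where q: "q = (g, id)" "g \<in> carrier G" "N #> g \<in> L"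
    by (cases q) (auto simp: quot_map_def)
  then show "q \<in> \<Union>L \<times> {id}"
    using rcos_self[OF _ is_subgroup] by auto
next
  fix q :: "'a \<times> (nat \<Rightarrow> nat)" assume "q \<in> \<Union>L \<times> {id}"
  then obtain g C where q: "q = (g, id)" "g \<in> C" "C \<in> L"
    by blast
  have "g \<in> carrier G"
    using q subgroup.subset[OF factgroup_subgroup_union_subgroup[OF L]] by blast
  moreover have "N #> g = C"
    using coset_rep[of C] repr_independence[of g N "coset_rep C"] q subgroup.subset[OF L] is_subgroup
    by auto
  ultimately show "q \<in> lift n (L \<times> {id})"
    using q id_in_sym_group by (auto simp: quot_map_def)
qed

lemma universal_space_fixed_operad:
  "\<exists>F. subgroup_family (QN n) F \<and> (\<forall>L. subgroup L (G Mod N) \<longrightarrow> L \<times> {id} \<in> F) \<and>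
     universal_space (QN n) F (lev ON n) (act ON n)"
proof -
  obtain F where F: "subgroup_family (Q n) F" and F_L: "\<And>L. subgroup L G \<Longrightarrow> L \<times> {id} \<in> F"
    and F_univ: "universal_space (Q n) F (lev Op n) (act Op n)"
    using N_infty unfolding N_infty_operad_def by blast
  define F' where "F' = {\<Gamma>. \<Gamma> \<subseteq> carrier (QN n) \<and> lift n \<Gamma> \<in> F}"
  have "subgroup_family (QN n) F'"
    unfolding F'_def by (rule subgroup_family_vimage[OF quot_map_hom quot_map_surj F])
  moreover have "L \<times> {id} \<in> F'" if L: "subgroup L (G Mod N)" for L
  proof -
    have "lift n (L \<times> {id}) \<in> F"
      unfolding lift_Times_id[OF L] by (rule F_L[OF factgroup_subgroup_union_subgroup[OF L]])
    then show ?thesis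
      using subgroup.subset[OF L] id_in_sym_group unfolding F'_def by auto
  qed
  moreover have "universal_space (QN n) F' (lev ON n) (act ON n)"
    unfolding universal_space_def
  proof (intro allI impI conjI)
    fix \<Gamma> assume \<Gamma>: "subgroup \<Gamma> (QN n)"
    have \<Gamma>_props: "\<Gamma> \<subseteq> carrier (QN n)" "\<one>\<^bsub>QN n\<^esub> \<in> \<Gamma>"
      using subgroup.subset[OF \<Gamma>] subgroup.one_closed[OF \<Gamma>] by auto
    have "subgroup (lift n \<Gamma>) (Q n)"
      by (rule group_hom.subgroup_vimage[OF quot_map_hom \<Gamma>])
    then have lift_univ:
      "lift n \<Gamma> \<in> F \<Longrightarrow> contractible_nonempty
          (subtopology (lev Op n) (fixed_points (lev Op n) (act Op n) (lift n \<Gamma>)))"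
      "lift n \<Gamma> \<notin> F \<Longrightarrow> fixed_points (lev Op n) (act Op n) (lift n \<Gamma>) = {}"
      using F_univ unfolding universal_space_def by blast+
    show "\<Gamma> \<in> F' \<Longrightarrow>
        contractible_nonempty (subtopology (lev ON n) (fixed_points (lev ON n) (act ON n) \<Gamma>))"
      using lift_univ(1) \<Gamma>_props
      unfolding F'_def subtopology_fixed_points_fixed_operad[OF \<Gamma>_props] by blast
    show "\<Gamma> \<notin> F' \<Longrightarrow> fixed_points (lev ON n) (act ON n) \<Gamma> = {}"
      using lift_univ(2) \<Gamma>_props
      unfolding F'_def fixed_points_fixed_operad[OF \<Gamma>_props] by blast
  qed
  ultimately show ?thesis
    by blast
qed

lemma PiE_NFix_subset:
  "(\<Pi>\<^sub>E i\<in>{1..k}. NFix (j i)) \<subseteq> (\<Pi>\<^sub>E i\<in>{1..k}. topspace (lev Op (j i)))"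
  using NFix_subset by (auto simp: PiE_def Pi_def)

lemma comp_closed:
  assumes "c \<in> topspace (lev Op k)" and "d \<in> (\<Pi>\<^sub>E i\<in>{1..k}. topspace (lev Op (j i)))"
  shows "comp Op k j (c, d) \<in> topspace (lev Op (\<Sum>i\<in>{1..k}. j i))"
  using Op_comp_continuous[rule_format, of k j] assms unfolding continuous_map_def by auto

lemma comp_NFix:
  assumes c: "c \<in> NFix k" and d: "d \<in> (\<Pi>\<^sub>E i\<in>{1..k}. NFix (j i))"
  shows "comp Op k j (c, d) \<in> NFix (\<Sum>i\<in>{1..k}. j i)"
proof (rule NFixI)
  have c_top: "c \<in> topspace (lev Op k)"
    using c NFix_subset by blast
  have d_top: "d \<in> (\<Pi>\<^sub>E i\<in>{1..k}. topspace (lev Op (j i)))"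
    using d PiE_NFix_subset by blast
  show "comp Op k j (c, d) \<in> topspace (lev Op (\<Sum>i\<in>{1..k}. j i))"
    using comp_closed[OF c_top d_top] .
  fix m assume m: "m \<in> N"
  have "restrict (\<lambda>i. act Op (j i) (m, id) (d i)) {1..k} = restrict d {1..k}"
    by (rule restrict_ext) (use PiE_mem[OF d] NFixD[OF _ m] in blast)
  then have "restrict (\<lambda>i. act Op (j i) (m, id) (d i)) {1..k} = d"
    using d by simp
  then show "act Op (\<Sum>i\<in>{1..k}. j i) (m, id) (comp Op k j (c, d)) = comp Op k j (c, d)"
    using Op_comp_equivariant[rule_format, of m c k d j] m subset c_top d_top NFixD[OF c m] by auto
qed

lemma continuous_map_comp_fixed_operad:
  "continuous_map (prod_topology (lev ON k) (product_topology (\<lambda>i. lev ON (j i)) {1..k}))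
     (lev ON (\<Sum>i\<in>{1..k}. j i)) (comp Op k j)"
proof -
  have "prod_topology (lev ON k) (product_topology (\<lambda>i. lev ON (j i)) {1..k}) =
     subtopology (prod_topology (lev Op k) (product_topology (\<lambda>i. lev Op (j i)) {1..k}))
        (NFix k \<times> (\<Pi>\<^sub>E i\<in>{1..k}. NFix (j i)))"
    unfolding lev_fixed_operad subtopology_Times subtopology_product_topology ..
  moreover have "continuous_map
      (subtopology (prod_topology (lev Op k) (product_topology (\<lambda>i. lev Op (j i)) {1..k}))
        (NFix k \<times> (\<Pi>\<^sub>E i\<in>{1..k}. NFix (j i))))
      (subtopology (lev Op (\<Sum>i\<in>{1..k}. j i)) (NFix (\<Sum>i\<in>{1..k}. j i))) (comp Op k j)"
    using Op_comp_continuous comp_NFix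
    by (intro continuous_map_into_subtopology continuous_map_from_subtopology) auto
  ultimately show ?thesis
    by (simp add: lev_fixed_operad)
qed

lemma space_action_fixed_operad: "space_action (QN n) (lev ON n) (act ON n)"
  unfolding space_action_def topspace_fixed_operad
proof (intro conjI ballI)
  interpret quot: group_hom "Q n" "QN n" quot_map
    by (rule quot_map_hom)
  fix q assume "q \<in> carrier (QN n)"
  then obtain q' where q': "q' \<in> carrier (Q n)" "q = quot_map q'"
    using quot_map_surj by blast
  have "continuous_map (lev ON n) (lev ON n) (act Op n q')"
    unfolding lev_fixed_operad
    using q' Op_space_action[of n] act_DirProd_NFix NFix_subset unfolding space_action_def
    by (intro continuous_map_into_subtopology continuous_map_from_subtopology) auto
  then show "continuous_map (lev ON n) (lev ON n) (act ON n q)"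
    by (rule continuous_map_eq) (use act_fixed_operad_quot_map q' topspace_fixed_operad in auto)
next
  fix x assume x: "x \<in> NFix n"
  then have "act Op n (\<one>, id) x = x"
    using space_action_DirProdD(2)[OF Op_space_action] NFix_subset by blast
  then show "act ON n \<one>\<^bsub>QN n\<^esub> x = x"
    using act_fixed_operad_one[OF x id_in_sym_group] by (simp add: sym_group_one)
next
  interpret quot: group_hom "Q n" "QN n" quot_map
    by (rule quot_map_hom)
  fix q1 q2 x assume q: "q1 \<in> carrier (QN n)" "q2 \<in> carrier (QN n)" and x: "x \<in> NFix n"
  obtain q1' q2' where q': "q1' \<in> carrier (Q n)" "q1 = quot_map q1'" "q2' \<in> carrier (Q n)" "q2 = quot_map q2'"
    using quot_map_surj q by blast
  have "act ON n (q1 \<otimes>\<^bsub>QN n\<^esub> q2) x = act Op n (q1' \<otimes>\<^bsub>Q n\<^esub> q2') x"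
    using act_fixed_operad_quot_map[OF x quot.G.m_closed[OF q'(1) q'(3)]] quot.hom_mult[OF q'(1) q'(3)] q'
    by simp
  also have "\<dots> = act Op n q1' (act Op n q2' x)"
    using act_mult_DirProd q' x NFix_subset by blast
  also have "\<dots> = act ON n q1 (act ON n q2 x)"
    using act_fixed_operad_quot_map[OF x] act_fixed_operad_quot_map[OF act_DirProd_NFix[OF x]] q' by simp
  finally show "act ON n (q1 \<otimes>\<^bsub>QN n\<^esub> q2) x = act ON n q1 (act ON n q2 x)" .
qed

lemma comp_equivariant_top_fixed_operad:
  assumes \<sigma>: "\<sigma> \<in> carrier (sym_group k)" and \<beta>: "\<beta> \<in> carrier (sym_group (\<Sum>i\<in>{1..k}. j i))"
    and blocks: "\<forall>i\<in>{1..k}. \<forall>l\<in>{1..j (\<sigma> i)}. \<beta> (blk (j \<circ> \<sigma>) i + l) = blk j (\<sigma> i) + l"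
    and c: "c \<in> NFix k" and d: "d \<in> (\<Pi>\<^sub>E i\<in>{1..k}. NFix (j i))"
  shows "comp Op k j (act ON k (N, \<sigma>) c, d) =
    act ON (\<Sum>i\<in>{1..k}. j i) (N, \<beta>) (comp Op k (j \<circ> \<sigma>) (c, restrict (d \<circ> \<sigma>) {1..k}))"
proof -
  have \<sigma>_perm: "\<sigma> permutes {1..k}"
    using \<sigma> sym_group_carrier by blast
  have d\<sigma>: "restrict (d \<circ> \<sigma>) {1..k} \<in> (\<Pi>\<^sub>E i\<in>{1..k}. NFix ((j \<circ> \<sigma>) i))"
    using d permutes_in_image[OF \<sigma>_perm] by (auto simp: PiE_def Pi_def)
  have sum_eq: "(\<Sum>i\<in>{1..k}. (j \<circ> \<sigma>) i) = (\<Sum>i\<in>{1..k}. j i)"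
    using sum.permute[OF \<sigma>_perm, of j] by simp
  have comp_perm_NFix: "comp Op k (j \<circ> \<sigma>) (c, restrict (d \<circ> \<sigma>) {1..k}) \<in> NFix (\<Sum>i\<in>{1..k}. j i)"
    using comp_NFix[OF c d\<sigma>] sum_eq by (simp del: comp_apply)
  show ?thesis
    unfolding act_fixed_operad_one[OF c \<sigma>] act_fixed_operad_one[OF comp_perm_NFix \<beta>]
    by (rule Op_comp_equivariant_top[rule_format, OF \<sigma> \<beta> _ _ PiE_NFix_subset[THEN subsetD, OF d]])
      (use blocks c NFix_subset in auto)
qed

lemma comp_equivariant_bottom_fixed_operad:
  assumes \<tau>: "\<forall>i\<in>{1..k}. \<tau> i \<in> carrier (sym_group (j i))"
    and \<rho>: "\<rho> \<in> carrier (sym_group (\<Sum>i\<in>{1..k}. j i))"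
    and blocks: "\<forall>i\<in>{1..k}. \<forall>l\<in>{1..j i}. \<rho> (blk j i + l) = blk j i + \<tau> i l"
    and c: "c \<in> NFix k" and d: "d \<in> (\<Pi>\<^sub>E i\<in>{1..k}. NFix (j i))"
  shows "comp Op k j (c, restrict (\<lambda>i. act ON (j i) (N, \<tau> i) (d i)) {1..k}) =
    act ON (\<Sum>i\<in>{1..k}. j i) (N, \<rho>) (comp Op k j (c, d))"
proof -
  have restrict_eq: "restrict (\<lambda>i. act ON (j i) (N, \<tau> i) (d i)) {1..k}
      = restrict (\<lambda>i. act Op (j i) (\<one>, \<tau> i) (d i)) {1..k}"
    by (rule restrict_ext) (use act_fixed_operad_one[OF PiE_mem[OF d]] \<tau> in blast)
  show ?thesis
    unfolding restrict_eq act_fixed_operad_one[OF comp_NFix[OF c d] \<rho>]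
    by (rule Op_comp_equivariant_bottom[rule_format, OF _ \<rho> _ _ PiE_NFix_subset[THEN subsetD, OF d]])
      (use \<tau> blocks subsetD[OF NFix_subset c] in auto)
qed

lemma Pi_operad_fixed_operad: "Pi_operad (G Mod N) ON"
proof -
  have oid: "oid ON = oid Op" and comp: "comp ON = comp Op"
    by (simp_all add: fixed_operad_def)
  have oid_NFix: "oid Op \<in> NFix 1"
    by (rule NFixI[OF Op_oid]) (use Op_oid_fixed subset in blast)
  show ?thesis
    unfolding Pi_operad_def topspace_fixed_operad oid comp one_FactGroup
  proof (intro conjI allI ballI impI)
    show "group (G Mod N)"
      by (rule factorgroup_is_group)
    show "\<And>n. space_action (QN n) (lev ON n) (act ON n)"
      by (rule space_action_fixed_operad)
    show "oid Op \<in> NFix 1"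
      by (fact oid_NFix)
    show "\<And>g. g \<in> carrier (G Mod N) \<Longrightarrow> act ON 1 (g, id) (oid Op) = oid Op"
      unfolding act_fixed_operad using Op_oid_fixed coset_rep(1) by blast
    show "\<And>k j. continuous_map (prod_topology (lev ON k) (product_topology (\<lambda>i. lev ON (j i)) {1..k}))
        (lev ON (\<Sum>i\<in>{1..k}. j i)) (comp Op k j)"
      by (rule continuous_map_comp_fixed_operad)
  next
    fix n x assume "x \<in> NFix n"
    then have "x \<in> topspace (lev Op n)"
      using NFix_subset by blast
    then show "comp Op 1 (\<lambda>_. n) (oid Op, \<lambda>_\<in>{1}. x) = x"
      and "comp Op n (\<lambda>_. 1) (x, \<lambda>_\<in>{1..n}. oid Op) = x"
      using Op_unit by blast+
  next
    fix k j h c d e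
    assume c: "c \<in> NFix k" and d: "d \<in> (\<Pi>\<^sub>E i\<in>{1..k}. NFix (j i))"
      and e: "e \<in> (\<Pi>\<^sub>E t\<in>{1..(\<Sum>i\<in>{1..k}. j i)}. NFix (h t))"
    show "comp Op (\<Sum>i\<in>{1..k}. j i) h (comp Op k j (c, d), e) =
       comp Op k (\<lambda>i. \<Sum>l\<in>{1..j i}. h (blk j i + l))
        (c, \<lambda>i\<in>{1..k}. comp Op (j i) (\<lambda>l. h (blk j i + l)) (d i, \<lambda>l\<in>{1..j i}. e (blk j i + l)))"
      by (rule Op_assoc[rule_format, OF _ PiE_NFix_subset[THEN subsetD, OF d]
          PiE_NFix_subset[THEN subsetD, OF e]]) (use c NFix_subset in blast)
  next
    fix k j g c d
    assume g: "g \<in> carrier (G Mod N)" and c: "c \<in> NFix k" and d: "d \<in> (\<Pi>\<^sub>E i\<in>{1..k}. NFix (j i))"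
    show "comp Op k j (act ON k (g, id) c, \<lambda>i\<in>{1..k}. act ON (j i) (g, id) (d i)) =
       act ON (\<Sum>i\<in>{1..k}. j i) (g, id) (comp Op k j (c, d))"
      unfolding act_fixed_operad
      by (rule Op_comp_equivariant[rule_format, OF coset_rep(1)[OF g] _ PiE_NFix_subset[THEN subsetD, OF d]])
        (use c NFix_subset in blast)
  qed (use comp_equivariant_top_fixed_operad comp_equivariant_bottom_fixed_operad in blast)+
qed

lemma equiv_contractible_fixed_operad:
  "equiv_contractible (G Mod N) (lev ON 0) (\<lambda>C. act ON 0 (C, id))"
proof -
  obtain x0 where x0: "x0 \<in> topspace (lev Op 0)" "\<And>g. g \<in> carrier G \<Longrightarrow> act Op 0 (g, id) x0 = x0"
    and htpy: "homotopic_with (\<lambda>f. \<forall>g\<in>carrier G. \<forall>x\<in>topspace (lev Op 0).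
          f (act Op 0 (g, id) x) = act Op 0 (g, id) (f x)) (lev Op 0) (lev Op 0) id (\<lambda>x. x0)"
    using N_infty[unfolded N_infty_operad_def, THEN conjunct2, THEN conjunct1]
    unfolding equiv_contractible_def by blast
  obtain h where h: "continuous_map (prod_topology (top_of_set {0..1::real}) (lev Op 0)) (lev Op 0) h"
    and h0: "\<And>x. h (0, x) = id x" and h1: "\<And>x. h (1, x) = x0"
    and h_equiv: "\<And>t. t \<in> {0..1} \<Longrightarrow> \<forall>g\<in>carrier G. \<forall>x\<in>topspace (lev Op 0).
         h (t, act Op 0 (g, id) x) = act Op 0 (g, id) (h (t, x))"
    using htpy unfolding homotopic_with_def by blast
  have h_NFix: "h (t, x) \<in> NFix 0" if t: "t \<in> {0..1}" and x: "x \<in> NFix 0" for t x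
  proof (rule NFixI)
    have "(t, x) \<in> topspace (prod_topology (top_of_set {0..1::real}) (lev Op 0))"
      using t x NFix_subset by auto
    then show "h (t, x) \<in> topspace (lev Op 0)"
      using h unfolding continuous_map_def by blast
    show "act Op 0 (m, id) (h (t, x)) = h (t, x)" if m: "m \<in> N" for m
    proof -
      have "h (t, act Op 0 (m, id) x) = act Op 0 (m, id) (h (t, x))"
        using h_equiv[OF t] subsetD[OF NFix_subset x] subsetD[OF subset m] by blast
      then show ?thesis
        using NFixD[OF x m] by simp
    qed
  qed
  show ?thesis
    unfolding equiv_contractible_def homotopic_with_def
  proof (intro bexI[of _ x0] conjI exI[of _ h] ballI allI)
    show "x0 \<in> topspace (lev ON 0)"
      using x0 subset by (auto simp: topspace_fixed_operad intro: NFixI)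
    show "act ON 0 (C, id) x0 = x0" if "C \<in> carrier (G Mod N)" for C
      unfolding act_fixed_operad using x0(2) coset_rep(1)[OF that] .
    show "continuous_map (prod_topology (top_of_set {0..1::real}) (lev ON 0)) (lev ON 0) h"
      unfolding lev_fixed_operad prod_topology_subtopology(2)
      using h_NFix by (intro continuous_map_into_subtopology continuous_map_from_subtopology[OF h]) auto
    show "h (0, x) = id x" "h (1, x) = x0" for x
      using h0 h1 by simp_all
    show "h (t, act ON 0 (C, id) x) = act ON 0 (C, id) (h (t, x))"
      if "t \<in> {0..1}" "C \<in> carrier (G Mod N)" "x \<in> topspace (lev ON 0)" for t C x
      unfolding act_fixed_operad
      using h_equiv that coset_rep(1) NFix_subset topspace_fixed_operad by blast
  qed
qed

lemma Op_Sigma_free: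
  "\<sigma> \<in> carrier (sym_group n) \<Longrightarrow> x \<in> topspace (lev Op n) \<Longrightarrow> act Op n (\<one>, \<sigma>) x = x \<Longrightarrow> \<sigma> = id"
  using N_infty[unfolded N_infty_operad_def, THEN conjunct2, THEN conjunct2, THEN conjunct1] by blast

lemma fixed_operad_Sigma_free:
  assumes \<sigma>: "\<sigma> \<in> carrier (sym_group n)" and x: "x \<in> topspace (lev ON n)"
    and fixed: "act ON n (\<one>\<^bsub>G Mod N\<^esub>, \<sigma>) x = x"
  shows "\<sigma> = id"
proof (rule Op_Sigma_free[OF \<sigma>])
  have x_NFix: "x \<in> NFix n"
    using x topspace_fixed_operad by simp
  then show "x \<in> topspace (lev Op n)"
    using NFix_subset by blast
  show "act Op n (\<one>, \<sigma>) x = x"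
    using fixed act_fixed_operad_one[OF x_NFix \<sigma>] by simp
qed

theorem N_infty_fixed_operad: "N_infty_operad (G Mod N) ON"
  unfolding N_infty_operad_def
  by (intro conjI allI ballI impI Pi_operad_fixed_operad equiv_contractible_fixed_operad
      universal_space_fixed_operad fixed_operad_Sigma_free)

lemma carrier_subgroup_Mod: "carrier ((G\<lparr>carrier := H\<rparr>) Mod N) = (\<lambda>h. N #> h) ` H"
  unfolding FactGroup_def RCOSETS_def r_coset_def by auto

lemma subgroup_image_Mod:
  assumes "subgroup H G"
  shows "subgroup ((\<lambda>h. N #> h) ` H) (G Mod N)"
proof -
  have "group_hom G (G Mod N) (\<lambda>h. N #> h)"
    by (simp add: group_hom_def group_hom_axioms_def is_group factorgroup_is_group r_coset_hom_Mod)
  then show ?thesis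
    using group_hom.subgroup_img_is_subgroup assms by blast
qed

lemma lift_graph_of_Lset:
  assumes H: "subgroup H G" and NH: "N \<subseteq> H"
    and perm: "\<And>C. C \<in> (\<lambda>h. N #> h) ` H \<Longrightarrow> Lset_perm T a e C \<in> carrier (sym_group (card T))"
  shows "lift (card T) (graph_of_Lset ((\<lambda>h. N #> h) ` H) T a e) = graph_of_Lset H T (\<lambda>h. a (N #> h)) e"
proof (rule equalityI; rule subsetI)
  fix q :: "'a \<times> (nat \<Rightarrow> nat)"
  assume "q \<in> lift (card T) (graph_of_Lset ((\<lambda>h. N #> h) ` H) T a e)"
  then obtain g where q: "q = (g, Lset_perm T a e (N #> g))" "g \<in> carrier G" "N #> g \<in> (\<lambda>h. N #> h) ` H"
    by (cases q) (auto simp: quot_map_def graph_of_Lset_eq)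
  then have "g \<in> H"
    using rcos_in_image_iff[OF is_subgroup H NH] by blast
  then show "q \<in> graph_of_Lset H T (\<lambda>h. a (N #> h)) e"
    using q(1) by (auto simp: graph_of_Lset_eq Lset_perm_def)
next
  fix q :: "'a \<times> (nat \<Rightarrow> nat)"
  assume "q \<in> graph_of_Lset H T (\<lambda>h. a (N #> h)) e"
  then obtain h where q: "q = (h, Lset_perm T a e (N #> h))" "h \<in> H"
    by (auto simp: graph_of_Lset_eq Lset_perm_def)
  then show "q \<in> lift (card T) (graph_of_Lset ((\<lambda>h. N #> h) ` H) T a e)"
    using perm subgroup.subset[OF H] by (auto simp: graph_of_Lset_eq quot_map_def)
qed

theorem admissible_fixed_operad_iff:
  assumes H: "subgroup H G" and NH: "N \<subseteq> H"
    and act: "set_action ((G Mod N)\<lparr>carrier := carrier ((G\<lparr>carrier := H\<rparr>) Mod N)\<rparr>) T a"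
  shows "admissible (G Mod N) ON (carrier ((G\<lparr>carrier := H\<rparr>) Mod N)) T a
     \<longleftrightarrow> admissible G Op H T (\<lambda>h. a (N #> h))"
proof -
  define HN where "HN = (\<lambda>h. N #> h) ` H"
  have HN_subgroup: "subgroup HN (G Mod N)"
    unfolding HN_def by (rule subgroup_image_Mod[OF H])
  have act_HN: "set_action ((G Mod N)\<lparr>carrier := HN\<rparr>) T a"
    using act unfolding carrier_subgroup_Mod HN_def .
  have bij: "bij_betw (a C) T T" if "C \<in> HN" for C
    using set_action_bij_betw[OF subgroup.subgroup_is_group[OF HN_subgroup factorgroup_is_group] act_HN]
      that by simp
  have "N \<in> HN"
    unfolding HN_def
    by (rule image_eqI[where x = \<one>]) (simp_all add: subset subgroup.one_closed[OF H])
  have FP_eq: "fixed_points (lev ON (card T)) (act ON (card T)) (graph_of_Lset HN T a e)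
      = fixed_points (lev Op (card T)) (act Op (card T)) (graph_of_Lset H T (\<lambda>h. a (N #> h)) e)"
    if e: "bij_betw e T {1..card T}" for e
  proof -
    have perm: "Lset_perm T a e C \<in> carrier (sym_group (card T))" if "C \<in> HN" for C
      by (rule Lset_perm_in_sym_group[OF e, of a C]) (rule bij[OF that])
    have "Lset_perm T a e N = id"
      by (rule Lset_perm_trivial[OF e]) (use act_HN in \<open>simp add: set_action_def\<close>)
    then have one: "\<one>\<^bsub>QN (card T)\<^esub> \<in> graph_of_Lset HN T a e"
      using \<open>N \<in> HN\<close> by (auto simp: graph_of_Lset_eq sym_group_one)
    have sub: "graph_of_Lset HN T a e \<subseteq> carrier (QN (card T))"
      using perm subgroup.subset[OF HN_subgroup] by (auto simp: graph_of_Lset_eq)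
    show ?thesis
      using fixed_points_fixed_operad[OF sub one] lift_graph_of_Lset[OF H NH perm[unfolded HN_def]]
      unfolding HN_def by simp
  qed
  show ?thesis
    unfolding admissible_def carrier_subgroup_Mod HN_def[symmetric]
    by (simp add: FP_eq cong: conj_cong)
qed

end

theorem mainTheorem20:
  fixes G :: "'g monoid" and N :: "'g set" and Op :: "('g, 'x) operad"
  assumes "group G" and "finite (carrier G)" and "N \<lhd> G"
    and "N_infty_operad G Op"
  shows "N_infty_operad (G Mod N) (fixed_operad G N Op) \<and>
         (\<forall>H (T :: 't set) a. subgroup H G \<longrightarrow> N \<subseteq> H \<longrightarrow> finite T \<longrightarrow>
           set_action ((G Mod N)\<lparr>carrier := carrier ((G\<lparr>carrier := H\<rparr>) Mod N)\<rparr>) T a \<longrightarrow>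
           (admissible (G Mod N) (fixed_operad G N Op) (carrier ((G\<lparr>carrier := H\<rparr>) Mod N)) T a
            \<longleftrightarrow> admissible G Op H T (\<lambda>h. a (N #>\<^bsub>G\<^esub> h))))"
proof -
  interpret N_infty_fixed_points N G Op
    by (intro N_infty_fixed_points.intro N_infty_fixed_points_axioms.intro assms(3,4))
  show ?thesis
    using N_infty_fixed_operad admissible_fixed_operad_iff by blast
qed

end
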